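(* Consider the following two-bidder auction. A single good has common value $v$ with CDF $F_v$, density $f_v$, support $\mathbb{R}_+$ and finite mean, and $\mathbb{E}[v]>L\ge 0$. Alice submits a bid knowing only $F_v$; then $v$ is realized and Bob, observing $v$ but not Alice's bid, submits a bid. The highest bid wins and pays its bid (payoff $v$ minus bid) unless it is strictly below the limit price $L$, in which case the good is unsold. If the bids tie, Bob wins; if Bob's bid equals $L$ he can win; a winning bid of Alice equal exactly to $L$ results in no sale. Suppose, in an equilibrium, Bob's bid as a function of $v$ is given by a non-decreasing function $\beta_L$, and let $\beta_L^{-1}(b)=\inf\{v:\beta_L(v)\ge b\}$ be its pseudo-inverse. Then every bid $b_A>L$ of Alice (in the support of her equilibrium strategy) satisfies $$b_A=\mathbb{E}\left[v\mid v<\beta_L^{-1}(b_A)\right].$$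
   Context: Bidders are risk neutral; equilibrium means perfect Bayesian Nash equilibrium. *)

theory Defs
  imports "HOL-Probability.Probability"
begin

definition val_dist :: "(real \<Rightarrow> real) \<Rightarrow> real measure" where
  "val_dist f = density lborel (\<lambda>v. ennreal (f v))"

text \<open>Pseudo-inverse of Bob's bid function (over the support v >= 0);
  the infimum of the empty set is +infinity.\<close>
definition pinv :: "(real \<Rightarrow> real) \<Rightarrow> real \<Rightarrow> ereal" where
  "pinv \<beta> b = Inf {ereal v | v. 0 \<le> v \<and> \<beta> v \<ge> b}"

definition cond_mean_below :: "real measure \<Rightarrow> ereal \<Rightarrow> real" where
  "cond_mean_below V t =
     (\<integral>v. v * indicator {v. ereal v < t} v \<partial>V) / measure V {v. ereal v < t}"

definition alice_payoff :: "real measure \<Rightarrow> real \<Rightarrow> (real \<Rightarrow> real) \<Rightarrow> real \<Rightarrow> real" where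
  "alice_payoff V L \<beta> b =
     (if b > L then (\<integral>v. (v - b) * indicator {v. 0 \<le> v \<and> \<beta> v < b} v \<partial>V) else 0)"

text \<open>Bob's expected payoff with value v and bid c, against Alice's mixed
  strategy G (a probability measure on bids). Bob wins iff c >= Alice's bid
  and c >= L.\<close>
definition bob_payoff :: "real measure \<Rightarrow> real \<Rightarrow> real \<Rightarrow> real \<Rightarrow> real" where
  "bob_payoff G L v c = (if c \<ge> L then (v - c) * measure G {..c} else 0)"

definition is_equilibrium :: "real measure \<Rightarrow> real measure \<Rightarrow> real \<Rightarrow> (real \<Rightarrow> real) \<Rightarrow> bool" where
  "is_equilibrium V G L \<beta> \<longleftrightarrow>
     (\<forall>v\<ge>0. \<forall>c. bob_payoff G L v c \<le> bob_payoff G L v (\<beta> v)) \<and>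
     (AE b in G. \<forall>b'. alice_payoff V L \<beta> b' \<le> alice_payoff V L \<beta> b)"

definition in_support :: "real measure \<Rightarrow> real \<Rightarrow> bool" where
  "in_support G b \<longleftrightarrow> (\<forall>e>0. measure G {b - e <..< b + e} > 0)"

end

theory Submission
  imports Defs
begin

(* Alice's equilibrium payoff is zero. It is nonnegative since she can bid L. If it were
   positive, let s be the lowest point of the support of her bids: Bob types above s win with
   positive probability, so every type that bids below s or loses at s has value at most s, and
   Alice's payoff at or just above s is nonpositive. Every bid bA > L in the support earns the
   equilibrium payoff: it is a limit of optimal bids, the payoff is left-continuous in the bid,
   and if optimal bids only approach bA from above, G has a gap below bA, so Bob types tying at
   bA have value at most bA and the right limit is at most the payoff at bA. Hence
   E[(v - bA) 1{beta v < bA}] = 0. The event {beta v < bA} agrees with {v < pinv beta bA} up to a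
   single point and has positive probability: otherwise all types in (0, bA) would bid exactly
   bA and Alice's payoff would be negative. *)

lemma AE_ex_in_measure_pos:
  assumes Q: "AE x in M. Q x" and A: "A \<in> sets M" "0 < measure M A"
  shows "\<exists>x\<in>A. Q x"
proof (rule ccontr)
  assume none: "\<not> (\<exists>x\<in>A. Q x)"
  from Q have "AE x in M. x \<notin> A" by eventually_elim (use none in blast)
  then have "A \<in> null_sets M" using A(1) by (subst AE_iff_null_sets)
  with A(2) show False by (simp add: measure_eq_0_null_sets)
qed

lemma AE_obtain_seq_tendsto:
  fixes M :: "real measure"
  assumes Q: "AE x in M. Q x" and sets_M: "sets M = sets borel" and A: "A \<in> sets borel"
    and pos: "\<And>e. 0 < e \<Longrightarrow> 0 < measure M (A \<inter> {b - e<..<b + e})"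
  obtains xs where "\<And>n. xs n \<in> A" "\<And>n. Q (xs n)" "xs \<longlonglongrightarrow> b"
proof -
  let ?I = "\<lambda>n::nat. A \<inter> {b - inverse (Suc n)<..<b + inverse (Suc n)}"
  have "\<exists>x\<in>?I n. Q x" for n
    using A sets_M by (intro AE_ex_in_measure_pos[OF Q] pos) auto
  then obtain xs where xs: "\<And>n. xs n \<in> ?I n \<and> Q (xs n)" by metis
  have "xs \<longlonglongrightarrow> b"
  proof (rule tendsto_sandwich)
    show "\<forall>\<^sub>F n in sequentially. b - inverse (Suc n) \<le> xs n"
      "\<forall>\<^sub>F n in sequentially. xs n \<le> b + inverse (Suc n)"
      using xs by (auto intro!: always_eventually less_imp_le)
    show "(\<lambda>n. b - inverse (Suc n)) \<longlonglongrightarrow> b" "(\<lambda>n. b + inverse (Suc n)) \<longlonglongrightarrow> b"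
      using tendsto_diff[OF tendsto_const LIMSEQ_inverse_real_of_nat]
        tendsto_add[OF tendsto_const LIMSEQ_inverse_real_of_nat] by auto
  qed
  with xs that show ?thesis by blast
qed

lemma tendsto_indicator_sublevel_from_below:
  fixes \<phi> :: "'a \<Rightarrow> real"
  assumes lim: "xs \<longlonglongrightarrow> b" and le: "\<And>n. xs n \<le> b"
  shows "(\<lambda>n. indicator {v. D v \<and> \<phi> v < xs n} v :: real) \<longlonglongrightarrow> indicator {v. D v \<and> \<phi> v < b} v"
proof (cases "D v \<and> \<phi> v < b")
  case True
  then have "\<forall>\<^sub>F n in sequentially. \<phi> v < xs n" using order_tendstoD(1)[OF lim] by blast
  then have "\<forall>\<^sub>F n in sequentially. indicator {v. D v \<and> \<phi> v < xs n} v = (1::real)"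
    by eventually_elim (use True in simp)
  with True show ?thesis by (simp add: tendsto_eventually)
next
  case False
  then have "indicator {v. D v \<and> \<phi> v < xs n} v = (0::real)" for n
    using le[of n] by auto
  with False show ?thesis by simp
qed

lemma tendsto_indicator_sublevel_from_above:
  fixes \<phi> :: "'a \<Rightarrow> real"
  assumes lim: "xs \<longlonglongrightarrow> b" and gt: "\<And>n. b < xs n"
  shows "(\<lambda>n. indicator {v. D v \<and> \<phi> v < xs n} v :: real) \<longlonglongrightarrow> indicator {v. D v \<and> \<phi> v \<le> b} v"
proof (cases "D v \<and> b < \<phi> v")
  case True
  then have "\<forall>\<^sub>F n in sequentially. xs n < \<phi> v" using order_tendstoD(2)[OF lim] by blast
  then have "\<forall>\<^sub>F n in sequentially. indicator {v. D v \<and> \<phi> v < xs n} v = (0::real)"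
    by eventually_elim simp
  with True show ?thesis by (simp add: tendsto_eventually)
next
  case False
  then have "indicator {v. D v \<and> \<phi> v < xs n} v = (indicator {v. D v \<and> \<phi> v \<le> b} v :: real)" for n
    using gt[of n] by (auto simp: indicator_def)
  then show ?thesis by simp
qed

lemma (in finite_measure) tendsto_integral_diff_mult_indicator:
  fixes X :: "'a \<Rightarrow> real" and xs :: "nat \<Rightarrow> real"
  assumes X: "integrable M X" and A: "\<And>n. A n \<in> sets M" and B: "B \<in> sets M"
    and lim: "xs \<longlonglongrightarrow> b" and ind: "\<And>v. (\<lambda>n. indicator (A n) v :: real) \<longlonglongrightarrow> indicator B v"
  shows "(\<lambda>n. \<integral>v. (X v - xs n) * indicator (A n) v \<partial>M) \<longlonglongrightarrow> (\<integral>v. (X v - b) * indicator B v \<partial>M)"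
proof -
  obtain K where "\<forall>n. norm (xs n) \<le> K"
    using convergent_imp_Bseq[OF convergentI[OF lim]] by (rule BseqE) blast
  then have K: "norm (xs n) \<le> K" for n by blast
  have [measurable]: "X \<in> borel_measurable M" using X by (rule borel_measurable_integrable)
  note A[measurable] B[measurable]
  show ?thesis
  proof (rule integral_dominated_convergence)
    show "integrable M (\<lambda>v. \<bar>X v\<bar> + K)"
      by (intro Bochner_Integration.integrable_add integrable_abs X integrable_const)
    show "AE v in M. (\<lambda>n. (X v - xs n) * indicator (A n) v) \<longlonglongrightarrow> (X v - b) * indicator B v"
      by (intro AE_I2 tendsto_intros lim ind)
    show "AE v in M. norm ((X v - xs n) * indicator (A n) v) \<le> \<bar>X v\<bar> + K" for n
    proof (rule AE_I2)
      fix v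
      have "\<bar>X v - xs n\<bar> \<le> \<bar>X v\<bar> + \<bar>xs n\<bar>" by (rule abs_triangle_ineq4)
      then show "norm ((X v - xs n) * indicator (A n) v) \<le> \<bar>X v\<bar> + K"
        using K[of n] by (simp add: indicator_def)
    qed
    show "(\<lambda>v. (X v - b) * indicator B v) \<in> borel_measurable M"
      "(\<lambda>v. (X v - xs n) * indicator (A n) v) \<in> borel_measurable M" for n
      by measurable
  qed
qed

lemma integral_diff_mult_indicator_nonpos:
  fixes M :: "real measure"
  assumes "\<And>v. v \<in> A \<Longrightarrow> v \<le> b"
  shows "(\<integral>v. (v - b) * indicator A v \<partial>M) \<le> 0"
proof -
  have "0 \<le> (\<integral>v. - ((v - b) * indicator A v) \<partial>M)"
    using assms by (intro integral_nonneg_AE AE_I2) (auto simp: indicator_def)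
  then show ?thesis by simp
qed

lemma (in real_distribution) cdf_support_bottom:
  assumes "cdf M a = 0"
  obtains s where "a \<le> s" "\<And>c. c < s \<Longrightarrow> cdf M c = 0" "\<And>c. s < c \<Longrightarrow> 0 < cdf M c"
proof -
  define T where "T = {c. 0 < cdf M c}"
  obtain c where "1 / 2 < cdf M c"
    using order_tendstoD(1)[OF cdf_lim_at_top_prob, of "1 / 2"]
    by (auto simp: eventually_at_top_linorder)
  then have "c \<in> T" by (simp add: T_def)
  then have "T \<noteq> {}" by blast
  have T_above: "a < c" if "c \<in> T" for c
  proof (rule ccontr)
    assume "\<not> a < c"
    then have "cdf M c \<le> cdf M a" by (intro cdf_nondecreasing) simp
    with that assms show False by (simp add: T_def)
  qed
  have "bdd_below T"
    by (rule bdd_belowI[of _ a]) (simp add: T_above less_imp_le)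
  show ?thesis
  proof (rule that)
    show "a \<le> Inf T" using \<open>T \<noteq> {}\<close> T_above by (simp add: cInf_greatest less_imp_le)
    show "cdf M c = 0" if "c < Inf T" for c
    proof -
      have "c \<notin> T" using that cInf_lower[OF _ \<open>bdd_below T\<close>] by (meson not_le)
      then show ?thesis using cdf_nonneg[of c] by (simp add: T_def)
    qed
    show "0 < cdf M c" if "Inf T < c" for c
    proof -
      have "\<exists>x\<in>T. x < c" using that cInf_less_iff[OF \<open>T \<noteq> {}\<close> \<open>bdd_below T\<close>] by simp
      then obtain x where "x \<in> T" "x < c" by blast
      then show ?thesis using cdf_nondecreasing[of x c] by (simp add: T_def)
    qed
  qed
qed

lemma (in finite_borel_measure) cdf_eq_0_at_atomless_bottom:
  assumes below: "\<And>c. c < s \<Longrightarrow> cdf M c = 0" and "measure M {s} = 0"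
  shows "cdf M s = 0"
proof -
  have "(cdf M \<longlongrightarrow> cdf M s) (at_left s)"
    using isCont_cdf[of s] \<open>measure M {s} = 0\<close> by (simp add: isCont_def filterlim_at_split)
  moreover have "(cdf M \<longlongrightarrow> 0) (at_left s)"
    using below
    by (intro tendsto_eventually) (auto simp: eventually_at_left_field intro!: exI[of _ "s - 1"])
  ultimately show ?thesis by (rule tendsto_unique[OF trivial_limit_at_left_real])
qed

lemma (in finite_borel_measure) cdf_pos_above_support:
  assumes "in_support M b" "b < c"
  shows "0 < cdf M c"
proof -
  have "0 < measure M {b - (c - b)<..<b + (c - b)}"
    using assms unfolding in_support_def by (meson diff_gt_0_iff_gt)
  also have "\<dots> \<le> cdf M c" unfolding cdf_def by (intro finite_measure_mono) auto
  finally show ?thesis .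
qed

lemma pinv_sublevel_iff:
  assumes mono: "mono_on {0..} \<beta>" and v: "0 \<le> v" "ereal v \<noteq> pinv \<beta> b"
  shows "ereal v < pinv \<beta> b \<longleftrightarrow> \<beta> v < b"
proof
  assume less: "ereal v < pinv \<beta> b"
  show "\<beta> v < b"
  proof (rule ccontr)
    assume "\<not> \<beta> v < b"
    then have "pinv \<beta> b \<le> ereal v" using v(1) unfolding pinv_def by (intro Inf_lower) auto
    with less show False by simp
  qed
next
  assume "\<beta> v < b"
  have "ereal v \<le> pinv \<beta> b" unfolding pinv_def
  proof (rule Inf_greatest)
    fix z assume "z \<in> {ereal w | w. 0 \<le> w \<and> b \<le> \<beta> w}"
    then obtain w where w: "z = ereal w" "0 \<le> w" "b \<le> \<beta> w" by blast
    have "v \<le> w"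
    proof (rule ccontr)
      assume "\<not> v \<le> w"
      then have "\<beta> w \<le> \<beta> v" using mono w(2) by (auto intro: mono_onD)
      with w(3) \<open>\<beta> v < b\<close> show False by simp
    qed
    with w(1) show "ereal v \<le> z" by simp
  qed
  with v(2) show "ereal v < pinv \<beta> b" by simp
qed

lemma AE_val_dist:
  assumes "f \<in> borel_measurable borel" "AE v in lborel. 0 < f v \<longrightarrow> P v"
  shows "AE v in val_dist f. P v"
  using assms unfolding val_dist_def by (subst AE_density) auto

lemma AE_val_dist_nonneg_neq:
  assumes f: "f \<in> borel_measurable borel" and zero: "\<forall>v<0. f v = 0"
  shows "AE v in val_dist f. 0 \<le> v \<and> v \<noteq> c"
proof (rule AE_val_dist[OF f])
  show "AE v in lborel. 0 < f v \<longrightarrow> 0 \<le> v \<and> v \<noteq> c"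
    using AE_lborel_singleton[of c] by eventually_elim (use zero in \<open>auto simp: not_le[symmetric]\<close>)
qed

lemma emeasure_val_dist_pos:
  assumes f: "f \<in> borel_measurable borel" and pos: "\<forall>v>0. 0 < f v" and "0 \<le> a" "a < x"
  shows "emeasure (val_dist f) {a<..<x} \<noteq> 0"
proof
  assume "emeasure (val_dist f) {a<..<x} = 0"
  then have "AE v in val_dist f. v \<notin> {a<..<x}"
    by (subst AE_iff_null_sets[symmetric]) (simp_all add: null_sets_def val_dist_def)
  then have "AE v in lborel. 0 < f v \<longrightarrow> v \<notin> {a<..<x}"
    using f unfolding val_dist_def by (subst (asm) AE_density) auto
  then have "AE v in lborel. v \<notin> {a<..<x}" by eventually_elim (use pos \<open>0 \<le> a\<close> in auto)
  then have "emeasure lborel {a<..<x} = 0" by (subst (asm) AE_iff_null_sets[symmetric]) auto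
  with \<open>a < x\<close> show False by simp
qed

locale auction_equilibrium =
  V: real_distribution "val_dist f" + G: real_distribution G
  for f :: "real \<Rightarrow> real" and G :: "real measure" +
  fixes L :: real and \<beta> :: "real \<Rightarrow> real"
  assumes f_meas: "f \<in> borel_measurable borel"
    and f_supp_neg: "\<forall>v<0. f v = 0"
    and f_supp_pos: "\<forall>v>0. 0 < f v"
    and finite_mean: "integrable (val_dist f) (\<lambda>v. v)"
    and L_nonneg: "0 \<le> L"
    and \<beta>_mono: "mono_on {0..} \<beta>"
    and eq: "is_equilibrium (val_dist f) G L \<beta>"
begin

abbreviation "V \<equiv> val_dist f"
abbreviation "P \<equiv> alice_payoff V L \<beta>"

definition outbid :: "real \<Rightarrow> real set" where
  "outbid b = {v. 0 \<le> v \<and> \<beta> v < b}"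

definition weakly_outbid :: "real \<Rightarrow> real set" where
  "weakly_outbid b = {v. 0 \<le> v \<and> \<beta> v \<le> b}"

lemma outbid_borel [measurable]: "outbid b \<in> sets borel"
proof (rule real_interval_borel_measurable)
  show "is_interval (outbid b)"
    unfolding is_interval_1 outbid_def using \<beta>_mono
    by (auto simp: mono_on_def) (meson order.trans le_less_trans)
qed

lemma weakly_outbid_borel [measurable]: "weakly_outbid b \<in> sets borel"
proof (rule real_interval_borel_measurable)
  show "is_interval (weakly_outbid b)"
    unfolding is_interval_1 weakly_outbid_def using \<beta>_mono
    by (auto simp: mono_on_def) (meson order.trans)
qed

lemma integrable_diff_mult_indicator:
  "A \<in> sets borel \<Longrightarrow> integrable V (\<lambda>v. (v - b) * indicator A v)"
  using finite_mean
  by (intro integrable_real_mult_indicator Bochner_Integration.integrable_diff) auto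

lemma alice_payoff_eq_integral: "L < b \<Longrightarrow> P b = (\<integral>v. (v - b) * indicator (outbid b) v \<partial>V)"
  by (simp add: alice_payoff_def outbid_def)

lemma bob_best_response: "0 \<le> v \<Longrightarrow> bob_payoff G L v c \<le> bob_payoff G L v (\<beta> v)"
  using eq by (auto simp: is_equilibrium_def)

lemma bob_payoff_cdf: "bob_payoff G L v c = (if L \<le> c then (v - c) * cdf G c else 0)"
  by (simp add: bob_payoff_def cdf_def)

lemma bob_wins_if_profitable:
  assumes "0 \<le> v" "L \<le> c" "c < v" "0 < cdf G c"
  shows "0 < cdf G (\<beta> v)"
proof -
  have "0 < bob_payoff G L v c" using assms by (simp add: bob_payoff_cdf)
  also have "\<dots> \<le> bob_payoff G L v (\<beta> v)" using bob_best_response \<open>0 \<le> v\<close> .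
  finally show ?thesis using G.cdf_nonneg[of "\<beta> v"]
    by (auto simp: bob_payoff_cdf zero_less_mult_iff split: if_splits)
qed

lemma bob_loses_if_overbidding:
  assumes "0 \<le> v" "v < \<beta> v" "L \<le> \<beta> v"
  shows "cdf G (\<beta> v) = 0"
proof -
  have "bob_payoff G L v (L - 1) \<le> bob_payoff G L v (\<beta> v)" using bob_best_response \<open>0 \<le> v\<close> .
  then have "0 \<le> (v - \<beta> v) * cdf G (\<beta> v)" using assms(3) by (simp add: bob_payoff_cdf)
  with assms(2) G.cdf_nonneg[of "\<beta> v"] show ?thesis by (auto simp: zero_le_mult_iff)
qed

lemma bob_never_wins_imp_le:
  assumes "L \<le> s" and above: "\<And>c. s < c \<Longrightarrow> 0 < cdf G c"
    and v: "0 \<le> v" "cdf G (\<beta> v) = 0"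
  shows "v \<le> s"
proof (rule ccontr)
  assume "\<not> v \<le> s"
  then have "0 < cdf G (\<beta> v)"
    using \<open>L \<le> s\<close> by (intro bob_wins_if_profitable[OF v(1), of "(s + v) / 2"] above) auto
  with v(2) show False by simp
qed

lemma bob_bid_at_gap_top:
  assumes b: "in_support G b" and c: "L \<le> c" "c < b" and gap: "measure G {c<..b} = 0"
    and v: "0 \<le> v" "\<beta> v = b"
  shows "v \<le> b"
proof -
  have cdf_c: "cdf G c = cdf G b" using G.cdf_diff_eq[OF \<open>c < b\<close>] gap by simp
  have "cdf G b = 0"
  proof (rule ccontr)
    assume "cdf G b \<noteq> 0"
    then have "0 < cdf G b" using G.cdf_nonneg[of b] by simp
    moreover have "bob_payoff G L v c \<le> bob_payoff G L v b"
      using bob_best_response[OF v(1)] v(2) by simp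
    ultimately show False using c cdf_c by (simp add: bob_payoff_cdf)
  qed
  show "v \<le> b"
  proof (rule bob_never_wins_imp_le)
    show "0 < cdf G d" if "b < d" for d using G.cdf_pos_above_support[OF b that] .
  qed (use c v \<open>cdf G b = 0\<close> in simp_all)
qed

definition alice_best :: "real \<Rightarrow> bool" where
  "alice_best b \<longleftrightarrow> (\<forall>b'. P b' \<le> P b)"

definition alice_value :: real where
  "alice_value = P (SOME b. alice_best b)"

lemma AE_alice_best: "AE b in G. alice_best b"
  using eq by (simp add: is_equilibrium_def alice_best_def)

lemma ex_alice_best_in: "A \<in> sets borel \<Longrightarrow> 0 < measure G A \<Longrightarrow> \<exists>b\<in>A. alice_best b"
  by (rule AE_ex_in_measure_pos[OF AE_alice_best]) simp_all

lemma alice_payoff_le_value: "P b \<le> alice_value"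
  and alice_payoff_best: "alice_best b \<Longrightarrow> P b = alice_value"
proof -
  have "\<exists>b. alice_best b" using ex_alice_best_in[of UNIV] G.prob_space by simp
  then have "alice_best (SOME b. alice_best b)" by (rule someI_ex)
  then show "P b \<le> alice_value" "alice_best b \<Longrightarrow> P b = alice_value"
    unfolding alice_value_def alice_best_def by (auto intro: order.antisym)
qed

lemma tendsto_payoff_integral_from_below:
  assumes "xs \<longlonglongrightarrow> b" "\<And>n. xs n \<le> b"
  shows "(\<lambda>n. \<integral>v. (v - xs n) * indicator (outbid (xs n)) v \<partial>V)
    \<longlonglongrightarrow> (\<integral>v. (v - b) * indicator (outbid b) v \<partial>V)"
  using assms outbid_borel unfolding outbid_def
  by (intro V.tendsto_integral_diff_mult_indicator finite_mean
      tendsto_indicator_sublevel_from_below) auto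

lemma tendsto_payoff_integral_from_above:
  assumes "xs \<longlonglongrightarrow> b" "\<And>n. b < xs n"
  shows "(\<lambda>n. \<integral>v. (v - xs n) * indicator (outbid (xs n)) v \<partial>V)
    \<longlonglongrightarrow> (\<integral>v. (v - b) * indicator (weakly_outbid b) v \<partial>V)"
  using assms outbid_borel weakly_outbid_borel unfolding outbid_def weakly_outbid_def
  by (intro V.tendsto_integral_diff_mult_indicator finite_mean
      tendsto_indicator_sublevel_from_above) auto

lemma alice_value_eq_limit:
  assumes A: "A \<in> sets borel" "A \<subseteq> {L<..}"
    and pos: "\<And>e. 0 < e \<Longrightarrow> 0 < measure G (A \<inter> {b - e<..<b + e})"
    and lim: "\<And>xs. (\<And>n. xs n \<in> A) \<Longrightarrow> xs \<longlonglongrightarrow> b \<Longrightarrow>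
      (\<lambda>n. \<integral>v. (v - xs n) * indicator (outbid (xs n)) v \<partial>V) \<longlonglongrightarrow> l"
  shows "alice_value = l"
proof -
  obtain xs where xs: "\<And>n. xs n \<in> A" "\<And>n. alice_best (xs n)" "xs \<longlonglongrightarrow> b"
    using AE_obtain_seq_tendsto[OF AE_alice_best G.events_eq_borel A(1) pos] by blast
  have "(\<integral>v. (v - xs n) * indicator (outbid (xs n)) v \<partial>V) = alice_value" for n
    using xs(1,2)[of n] A(2) alice_payoff_best alice_payoff_eq_integral by fastforce
  then show ?thesis using lim[OF xs(1,3)] by (simp add: LIMSEQ_const_iff)
qed

lemma alice_value_nonneg: "0 \<le> alice_value"
  using alice_payoff_le_value[of L] by (simp add: alice_payoff_def)

lemma alice_value_nonpos_at_support_bottom: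
  assumes "L \<le> s" and below: "\<And>c. c < s \<Longrightarrow> cdf G c = 0" and above: "\<And>c. s < c \<Longrightarrow> 0 < cdf G c"
  shows "alice_value \<le> 0"
proof (cases "measure G {s} = 0")
  case True
  with below have "cdf G s = 0" by (rule G.cdf_eq_0_at_atomless_bottom)
  have "alice_value = (\<integral>v. (v - s) * indicator (weakly_outbid s) v \<partial>V)"
  proof (rule alice_value_eq_limit[of "{s<..}"])
    show "0 < measure G ({s<..} \<inter> {s - e<..<s + e})" if "0 < e" for e
    proof -
      have "0 < cdf G (s + e / 2) - cdf G s" using above[of "s + e / 2"] that \<open>cdf G s = 0\<close> by simp
      also have "\<dots> = measure G {s<..s + e / 2}" using that by (simp add: G.cdf_diff_eq)
      also have "\<dots> \<le> measure G ({s<..} \<inter> {s - e<..<s + e})"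
        using that by (intro G.finite_measure_mono) auto
      finally show ?thesis .
    qed
  qed (use \<open>L \<le> s\<close> tendsto_payoff_integral_from_above in auto)
  also have "\<dots> \<le> 0"
  proof (rule integral_diff_mult_indicator_nonpos)
    fix v assume "v \<in> weakly_outbid s"
    then have "0 \<le> v" "cdf G (\<beta> v) \<le> cdf G s"
      by (auto simp: weakly_outbid_def intro: G.cdf_nondecreasing)
    then show "v \<le> s"
      using bob_never_wins_imp_le[OF \<open>L \<le> s\<close> above] \<open>cdf G s = 0\<close> G.cdf_nonneg[of "\<beta> v"] by simp
  qed
  finally show ?thesis .
next
  case False
  then have "\<exists>b\<in>{s}. alice_best b" by (intro ex_alice_best_in) (auto simp: zero_less_measure_iff)
  then have best: "P s = alice_value" by (simp add: alice_payoff_best)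
  show ?thesis
  proof (cases "L < s")
    case True
    have "P s \<le> 0" unfolding alice_payoff_eq_integral[OF True]
    proof (rule integral_diff_mult_indicator_nonpos)
      fix v assume "v \<in> outbid s"
      then show "v \<le> s"
        using bob_never_wins_imp_le[OF \<open>L \<le> s\<close> above] below by (auto simp: outbid_def)
    qed
    with best show ?thesis by simp
  next
    case False
    with best show ?thesis by (simp add: alice_payoff_def)
  qed
qed

lemma alice_value_eq_zero: "alice_value = 0"
proof -
  have "alice_value \<le> 0"
  proof (cases "cdf G L = 0")
    case True
    obtain s where "L \<le> s" "\<And>c. c < s \<Longrightarrow> cdf G c = 0" "\<And>c. s < c \<Longrightarrow> 0 < cdf G c"
      using G.cdf_support_bottom[OF True] by blast
    then show ?thesis by (rule alice_value_nonpos_at_support_bottom)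
  next
    case False
    then have "0 < measure G {..L}" by (simp add: cdf_def zero_less_measure_iff)
    then obtain b where "b \<le> L" "alice_best b" using ex_alice_best_in[of "{..L}"] by auto
    then show ?thesis using alice_payoff_best[of b] by (simp add: alice_payoff_def)
  qed
  with alice_value_nonneg show ?thesis by simp
qed

lemma alice_value_at_gap:
  assumes b: "in_support G b" and c: "L \<le> c" "c < b" and gap: "measure G {c<..b} = 0"
  shows "alice_value = (\<integral>v. (v - b) * indicator (weakly_outbid b) v \<partial>V)"
proof (rule alice_value_eq_limit[of "{b<..}"])
  show "0 < measure G ({b<..} \<inter> {b - e<..<b + e})" if "0 < e" for e
  proof -
    define d where "d = min e (b - c)"
    have "0 < d" using that c by (simp add: d_def)
    then have "0 < measure G {b - d<..<b + d}" using b unfolding in_support_def by blast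
    also have "\<dots> \<le> measure G ({c<..b} \<union> ({b<..} \<inter> {b - e<..<b + e}))"
      by (intro G.finite_measure_mono) (auto simp: d_def)
    also have "\<dots> \<le> measure G {c<..b} + measure G ({b<..} \<inter> {b - e<..<b + e})"
      by (intro measure_Un_le) auto
    finally show ?thesis using gap by simp
  qed
qed (use c tendsto_payoff_integral_from_above in auto)

lemma alice_payoff_at_support_bid:
  assumes b: "in_support G b" "L < b"
  shows "P b = alice_value"
proof (cases "\<forall>e>0. 0 < measure G {b - e<..b}")
  case True
  have "alice_value = (\<integral>v. (v - b) * indicator (outbid b) v \<partial>V)"
  proof (rule alice_value_eq_limit[of "{L<..b}"])
    show "0 < measure G ({L<..b} \<inter> {b - e<..<b + e})" if "0 < e" for e
    proof -
      have "0 < measure G {b - min e (b - L)<..b}" using True that b(2) by simp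
      also have "\<dots> \<le> measure G ({L<..b} \<inter> {b - e<..<b + e})"
        using that by (intro G.finite_measure_mono) auto
      finally show ?thesis .
    qed
  qed (use tendsto_payoff_integral_from_below in auto)
  with b(2) show ?thesis by (simp add: alice_payoff_eq_integral)
next
  case False
  then obtain e where "0 < e" "measure G {b - e<..b} = 0" by (auto simp: zero_less_measure_iff)
  define c where "c = max (b - e) L"
  have "measure G {c<..b} \<le> measure G {b - e<..b}"
    by (intro G.finite_measure_mono) (auto simp: c_def)
  with \<open>measure G {b - e<..b} = 0\<close> have gap: "measure G {c<..b} = 0" by (simp add: measure_le_0_iff)
  have c: "L \<le> c" "c < b" using \<open>0 < e\<close> b(2) by (auto simp: c_def)
  have "alice_value = (\<integral>v. (v - b) * indicator (weakly_outbid b) v \<partial>V)"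
    by (rule alice_value_at_gap[OF b(1) c gap])
  also have "\<dots> \<le> (\<integral>v. (v - b) * indicator (outbid b) v \<partial>V)"
  proof (intro integral_mono integrable_diff_mult_indicator outbid_borel weakly_outbid_borel)
    fix v
    show "(v - b) * indicator (weakly_outbid b) v \<le> (v - b) * indicator (outbid b) v"
    proof (cases "v \<in> weakly_outbid b - outbid b")
      case True
      then have "v \<le> b"
        using bob_bid_at_gap_top[OF b(1) c gap] by (auto simp: weakly_outbid_def outbid_def)
      with True show ?thesis by simp
    next
      case False
      then show ?thesis by (auto simp: indicator_def weakly_outbid_def outbid_def)
    qed
  qed
  also have "\<dots> = P b" using b(2) by (simp add: alice_payoff_eq_integral)
  finally show ?thesis using alice_payoff_le_value[of b] by simp
qed

lemma bid_ge_if_outbid_null: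
  assumes null: "emeasure V (outbid b) = 0" and "0 < v"
  shows "b \<le> \<beta> v"
proof (rule ccontr)
  assume "\<not> b \<le> \<beta> v"
  then have "{0<..<v} \<subseteq> outbid b"
    using \<beta>_mono \<open>0 < v\<close>
    by (auto simp: outbid_def mono_on_def) (meson le_less_trans less_imp_le not_le)
  then have "emeasure V {0<..<v} = 0" using null emeasure_mono[of "{0<..<v}" "outbid b" V] by simp
  with emeasure_val_dist_pos[OF f_meas f_supp_pos order.refl \<open>0 < v\<close>] show False by simp
qed

lemma measure_outbid_pos:
  assumes b: "in_support G b" "L < b"
  shows "0 < measure V (outbid b)"
proof (rule ccontr)
  assume "\<not> 0 < measure V (outbid b)"
  then have "emeasure V (outbid b) = 0" by (simp add: V.emeasure_eq_measure zero_less_measure_iff)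
  note high = bid_ge_if_outbid_null[OF this]
  have "0 < b" using b(2) L_nonneg by simp
  have low_bid: "\<beta> v = b" if "0 < v" "v < b" for v
  proof -
    have "cdf G (\<beta> v) = 0"
      using high[OF that(1)] that b(2) by (intro bob_loses_if_overbidding) auto
    then have "\<not> b < \<beta> v" using G.cdf_pos_above_support[OF b(1)] by force
    with high[OF that(1)] show ?thesis by simp
  qed
  have "cdf G b = 0"
    using bob_loses_if_overbidding[of "b / 2"] low_bid[of "b / 2"] \<open>0 < b\<close> b(2) by simp
  then have gap: "measure G {L<..b} = 0"
    using G.cdf_diff_eq[OF b(2)] G.cdf_nonneg[of L] G.cdf_nondecreasing[of L b] b(2) by simp
  have nonpos: "(v - b) * indicator (weakly_outbid b) v \<le> 0" for v
  proof (cases "v \<in> weakly_outbid b \<and> 0 < v")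
    case True
    then have "\<beta> v = b" using high by (auto simp: weakly_outbid_def intro: order.antisym)
    then have "v \<le> b" using True bob_bid_at_gap_top[OF b(1) order.refl b(2) gap] by simp
    then show ?thesis by (simp add: mult_nonpos_nonneg)
  next
    case False
    with \<open>0 < b\<close> show ?thesis by (auto simp: weakly_outbid_def indicator_def)
  qed
  have "alice_value = (\<integral>v. (v - b) * indicator (weakly_outbid b) v \<partial>V)"
    by (rule alice_value_at_gap[OF b(1) order.refl b(2) gap])
  also have "\<dots> < (\<integral>v. 0 \<partial>V)"
  proof (rule V.integral_less_AE[where A="{0<..<b}"])
    show "emeasure V {0<..<b} \<noteq> 0"
      by (rule emeasure_val_dist_pos[OF f_meas f_supp_pos order.refl \<open>0 < b\<close>])
    show "AE v in V. v \<in> {0<..<b} \<longrightarrow> (v - b) * indicator (weakly_outbid b) v \<noteq> 0"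
      using low_bid by (intro AE_I2) (auto simp: weakly_outbid_def)
  qed (auto intro: integrable_diff_mult_indicator nonpos)
  finally show False using alice_value_eq_zero by simp
qed

lemma alice_break_even:
  assumes "in_support G b" "L < b"
  shows "(\<integral>v. v * indicator (outbid b) v \<partial>V) = b * measure V (outbid b)"
proof -
  have "0 = (\<integral>v. (v - b) * indicator (outbid b) v \<partial>V)"
    using alice_payoff_at_support_bid[OF assms] alice_payoff_eq_integral[OF assms(2)]
      alice_value_eq_zero by simp
  also have "\<dots> = (\<integral>v. v * indicator (outbid b) v - b * indicator (outbid b) v \<partial>V)"
    by (simp add: left_diff_distrib)
  also have "\<dots> = (\<integral>v. v * indicator (outbid b) v \<partial>V) - b * measure V (outbid b)"
    using finite_mean by (subst Bochner_Integration.integral_diff)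
      (auto intro: integrable_real_mult_indicator simp: V.emeasure_eq_measure)
  finally show ?thesis by simp
qed

lemma cond_mean_below_pinv:
  "cond_mean_below V (pinv \<beta> b) = (\<integral>v. v * indicator (outbid b) v \<partial>V) / measure V (outbid b)"
proof -
  let ?T = "{v. ereal v < pinv \<beta> b}"
  have same: "AE v in V. v \<in> ?T \<longleftrightarrow> v \<in> outbid b"
    using AE_val_dist_nonneg_neq[OF f_meas f_supp_neg, of "real_of_ereal (pinv \<beta> b)"]
  proof eventually_elim
    case (elim v)
    then have "ereal v \<noteq> pinv \<beta> b" by (metis real_of_ereal.simps(1))
    with elim show ?case by (simp add: outbid_def pinv_sublevel_iff[OF \<beta>_mono])
  qed
  have "(\<integral>v. v * indicator ?T v \<partial>V) = (\<integral>v. v * indicator (outbid b) v \<partial>V)"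
  proof (rule integral_cong_AE)
    show "AE v in V. v * indicator ?T v = v * indicator (outbid b) v"
      using same by eventually_elim (simp add: indicator_def)
  qed measurable
  moreover have "measure V ?T = measure V (outbid b)"
    by (rule measure_eq_AE[OF same]) measurable
  ultimately show ?thesis by (simp add: cond_mean_below_def)
qed

end

theorem lemma3:
  fixes f :: "real \<Rightarrow> real" and L :: real and \<beta> :: "real \<Rightarrow> real"
    and G :: "real measure" and bA :: real
  assumes f_meas: "f \<in> borel_measurable borel"
    and f_nonneg: "\<forall>v. 0 \<le> f v"
    and f_prob: "prob_space (val_dist f)"
    and f_supp_neg: "\<forall>v<0. f v = 0"
    and f_supp_pos: "\<forall>v>0. 0 < f v"
    and finite_mean: "integrable (val_dist f) (\<lambda>v. v)"
    and L_nonneg: "0 \<le> L"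
    and mean_gt_L: "(\<integral>v. v \<partial>val_dist f) > L"
    and G_prob: "prob_space G"
    and G_sets: "sets G = sets borel"
    and \<beta>_mono: "mono_on {0..} \<beta>"
    and eq: "is_equilibrium (val_dist f) G L \<beta>"
    and bA_supp: "in_support G bA"
    and bA_gt: "bA > L"
  shows "bA = cond_mean_below (val_dist f) (pinv \<beta> bA)"
proof -
  have "real_distribution (val_dist f)" "real_distribution G"
    using f_prob G_prob G_sets
    by (simp_all add: real_distribution_def real_distribution_axioms_def val_dist_def)
  then interpret auction_equilibrium f G L \<beta>
    using f_meas f_supp_neg f_supp_pos finite_mean L_nonneg \<beta>_mono eq
    by (intro auction_equilibrium.intro auction_equilibrium_axioms.intro)
  show ?thesis
    using cond_mean_below_pinv alice_break_even[OF bA_supp bA_gt] measure_outbid_pos[OF bA_supp bA_gt]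
    by simp
qed

end
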